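(* Let $k$ be a commutative artin ring, let $\Lambda$ be an artin $k$-algebra, let $X$ and $Y$ be finite length $\Lambda$-modules, and let $M\subseteq X\oplus Y$ be a submodule. Then there exist submodules $X'\subseteq X$ and $Y'\subseteq Y$ such that $M\leq_{\mathrm{deg}}X'\oplus Y'$.
   Context: For finite length $\Lambda$-modules $M,N$, one writes $M\leq_{\mathrm{deg}}N$ if there exist a finite length $\Lambda$-module $Z$ and a short exact sequence of $\Lambda$-modules $0\to Z\to M\oplus Z\to N\to 0$. *)

theory Defs
  imports "HOL-Algebra.Algebra"
begin

text \<open>Left modules over a (not necessarily commutative) ring R.  The library locale
  module requires a commutative ring, so we state the axioms for an arbitrary ring.\<close>
definition left_module :: "('r, 'c) ring_scheme \<Rightarrow> ('r, 'a) module \<Rightarrow> bool" where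
  "left_module R M \<longleftrightarrow> ring R \<and> abelian_group M \<and>
     (\<forall>a\<in>carrier R. \<forall>x\<in>carrier M. a \<odot>\<^bsub>M\<^esub> x \<in> carrier M) \<and>
     (\<forall>a\<in>carrier R. \<forall>b\<in>carrier R. \<forall>x\<in>carrier M.
        (a \<oplus>\<^bsub>R\<^esub> b) \<odot>\<^bsub>M\<^esub> x = a \<odot>\<^bsub>M\<^esub> x \<oplus>\<^bsub>M\<^esub> b \<odot>\<^bsub>M\<^esub> x) \<and>
     (\<forall>a\<in>carrier R. \<forall>x\<in>carrier M. \<forall>y\<in>carrier M.
        a \<odot>\<^bsub>M\<^esub> (x \<oplus>\<^bsub>M\<^esub> y) = a \<odot>\<^bsub>M\<^esub> x \<oplus>\<^bsub>M\<^esub> a \<odot>\<^bsub>M\<^esub> y) \<and>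
     (\<forall>a\<in>carrier R. \<forall>b\<in>carrier R. \<forall>x\<in>carrier M.
        (a \<otimes>\<^bsub>R\<^esub> b) \<odot>\<^bsub>M\<^esub> x = a \<odot>\<^bsub>M\<^esub> (b \<odot>\<^bsub>M\<^esub> x)) \<and>
     (\<forall>x\<in>carrier M. \<one>\<^bsub>R\<^esub> \<odot>\<^bsub>M\<^esub> x = x)"

text \<open>Submodules (as subsets of the carrier); the submodule as a module is M\<lparr>carrier := N\<rparr>.\<close>
definition lsubmodule :: "('r, 'c) ring_scheme \<Rightarrow> ('r, 'a) module \<Rightarrow> 'a set \<Rightarrow> bool" where
  "lsubmodule R M N \<longleftrightarrow> N \<subseteq> carrier M \<and> \<zero>\<^bsub>M\<^esub> \<in> N \<and>
     (\<forall>x\<in>N. \<forall>y\<in>N. x \<oplus>\<^bsub>M\<^esub> y \<in> N) \<and> (\<forall>x\<in>N. \<ominus>\<^bsub>M\<^esub> x \<in> N) \<and>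
     (\<forall>a\<in>carrier R. \<forall>x\<in>N. a \<odot>\<^bsub>M\<^esub> x \<in> N)"

definition fin_length :: "('r, 'c) ring_scheme \<Rightarrow> ('r, 'a) module \<Rightarrow> bool" where
  "fin_length R M \<longleftrightarrow> left_module R M \<and>
     (\<exists>n::nat. \<forall>(C :: nat \<Rightarrow> 'a set) (m::nat).
        (\<forall>i\<le>m. lsubmodule R M (C i)) \<and> (\<forall>i<m. C i \<subset> C (Suc i)) \<longrightarrow> m \<le> n)"

definition dsum :: "('r, 'a) module \<Rightarrow> ('r, 'b) module \<Rightarrow> ('r, 'a \<times> 'b) module" where
  "dsum M N = \<lparr>carrier = carrier M \<times> carrier N,
      monoid.mult = (\<lambda>_ _. undefined), one = undefined,
      ring.zero = (\<zero>\<^bsub>M\<^esub>, \<zero>\<^bsub>N\<^esub>),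
      ring.add = (\<lambda>x y. (fst x \<oplus>\<^bsub>M\<^esub> fst y, snd x \<oplus>\<^bsub>N\<^esub> snd y)),
      smult = (\<lambda>a x. (a \<odot>\<^bsub>M\<^esub> fst x, a \<odot>\<^bsub>N\<^esub> snd x))\<rparr>"

definition lmod_hom :: "('r, 'c) ring_scheme \<Rightarrow> ('r, 'a) module \<Rightarrow> ('r, 'b) module \<Rightarrow> ('a \<Rightarrow> 'b) \<Rightarrow> bool" where
  "lmod_hom R M N f \<longleftrightarrow> f \<in> carrier M \<rightarrow> carrier N \<and>
     (\<forall>x\<in>carrier M. \<forall>y\<in>carrier M. f (x \<oplus>\<^bsub>M\<^esub> y) = f x \<oplus>\<^bsub>N\<^esub> f y) \<and>
     (\<forall>a\<in>carrier R. \<forall>x\<in>carrier M. f (a \<odot>\<^bsub>M\<^esub> x) = a \<odot>\<^bsub>N\<^esub> f x)"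

text \<open>Degeneration order: M \<le>deg N iff there is a finite length module Z and a short exact
  sequence 0 \<rightarrow> Z \<rightarrow> M \<oplus> Z \<rightarrow> N \<rightarrow> 0.  Every finite length module over R is finitely
  generated, hence has cardinality at most that of (carrier R) lists, so it suffices
  (up to isomorphism) to let Z range over modules whose carrier lives in type 'r list.\<close>
definition deg_le :: "('r, 'c) ring_scheme \<Rightarrow> ('r, 'a) module \<Rightarrow> ('r, 'b) module \<Rightarrow> bool" where
  "deg_le R M N \<longleftrightarrow> (\<exists>(Z :: ('r, 'r list) module) f g.
     fin_length R Z \<and>
     lmod_hom R Z (dsum M Z) f \<and> inj_on f (carrier Z) \<and>
     lmod_hom R (dsum M Z) N g \<and> g ` carrier (dsum M Z) = carrier N \<and>
     f ` carrier Z = {w \<in> carrier (dsum M Z). g w = \<zero>\<^bsub>N\<^esub>})"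

definition artin_cring :: "'k ring \<Rightarrow> bool" where
  "artin_cring k \<longleftrightarrow> cring k \<and>
     (\<forall>I :: nat \<Rightarrow> 'k set. (\<forall>n. ideal (I n) k) \<and> (\<forall>n. I (Suc n) \<subseteq> I n) \<longrightarrow>
        (\<exists>m. \<forall>n\<ge>m. I n = I m))"

definition artin_algebra :: "'k ring \<Rightarrow> 'r ring \<Rightarrow> ('k \<Rightarrow> 'r) \<Rightarrow> bool" where
  "artin_algebra k L \<phi> \<longleftrightarrow> artin_cring k \<and> ring L \<and> \<phi> \<in> ring_hom k L \<and>
     (\<forall>a\<in>carrier k. \<forall>x\<in>carrier L. \<phi> a \<otimes>\<^bsub>L\<^esub> x = x \<otimes>\<^bsub>L\<^esub> \<phi> a) \<and>
     (\<exists>S. finite S \<and> S \<subseteq> carrier L \<and>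
        (\<forall>x\<in>carrier L. \<exists>c \<in> S \<rightarrow> carrier k. x = finsum L (\<lambda>s. \<phi> (c s) \<otimes>\<^bsub>L\<^esub> s) S))"

end

theory Submission
  imports Defs
begin

text \<open>Put X' = {x. (x, 0) \<in> M} and Y' = snd ` M; then 0 \<rightarrow> X' \<rightarrow> M \<rightarrow> Y' \<rightarrow> 0 is exact. Any short
  exact sequence 0 \<rightarrow> A \<rightarrow> M \<rightarrow> N \<rightarrow> 0 with maps i and p gives M \<le>deg A \<oplus> N through the exact
  sequence 0 \<rightarrow> A \<rightarrow> M \<oplus> A \<rightarrow> A \<oplus> N \<rightarrow> 0 with maps a \<mapsto> (i a, 0) and (m, a) \<mapsto> (a, p m).
  The only technical point is that the auxiliary module of deg_le must be carried by lists of
  ring elements: a submodule of a finite length module is finitely generated, so its elements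
  are encoded by coefficient lists.\<close>

lemma left_module_ring: "left_module R M \<Longrightarrow> ring R"
  by (simp add: left_module_def)

lemma left_module_abelian_group: "left_module R M \<Longrightarrow> abelian_group M"
  by (simp add: left_module_def)

lemma left_module_smult_closed:
  "left_module R M \<Longrightarrow> a \<in> carrier R \<Longrightarrow> x \<in> carrier M \<Longrightarrow> a \<odot>\<^bsub>M\<^esub> x \<in> carrier M"
  by (simp add: left_module_def)

lemma left_module_add_smult:
  "left_module R M \<Longrightarrow> a \<in> carrier R \<Longrightarrow> b \<in> carrier R \<Longrightarrow> x \<in> carrier M \<Longrightarrow>
   (a \<oplus>\<^bsub>R\<^esub> b) \<odot>\<^bsub>M\<^esub> x = a \<odot>\<^bsub>M\<^esub> x \<oplus>\<^bsub>M\<^esub> b \<odot>\<^bsub>M\<^esub> x"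
  by (simp add: left_module_def)

lemma left_module_smult_add:
  "left_module R M \<Longrightarrow> a \<in> carrier R \<Longrightarrow> x \<in> carrier M \<Longrightarrow> y \<in> carrier M \<Longrightarrow>
   a \<odot>\<^bsub>M\<^esub> (x \<oplus>\<^bsub>M\<^esub> y) = a \<odot>\<^bsub>M\<^esub> x \<oplus>\<^bsub>M\<^esub> a \<odot>\<^bsub>M\<^esub> y"
  by (simp add: left_module_def)

lemma left_module_smult_assoc:
  "left_module R M \<Longrightarrow> a \<in> carrier R \<Longrightarrow> b \<in> carrier R \<Longrightarrow> x \<in> carrier M \<Longrightarrow>
   (a \<otimes>\<^bsub>R\<^esub> b) \<odot>\<^bsub>M\<^esub> x = a \<odot>\<^bsub>M\<^esub> (b \<odot>\<^bsub>M\<^esub> x)"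
  by (simp add: left_module_def)

lemma left_module_one_smult: "left_module R M \<Longrightarrow> x \<in> carrier M \<Longrightarrow> \<one>\<^bsub>R\<^esub> \<odot>\<^bsub>M\<^esub> x = x"
  by (simp add: left_module_def)

lemma left_module_zero_smult:
  assumes M: "left_module R M" and x: "x \<in> carrier M"
  shows "\<zero>\<^bsub>R\<^esub> \<odot>\<^bsub>M\<^esub> x = \<zero>\<^bsub>M\<^esub>"
proof -
  interpret M: abelian_group M using left_module_abelian_group[OF M] .
  interpret R: ring R using left_module_ring[OF M] .
  have closed: "\<zero>\<^bsub>R\<^esub> \<odot>\<^bsub>M\<^esub> x \<in> carrier M" using left_module_smult_closed[OF M] x by simp
  have "\<zero>\<^bsub>R\<^esub> \<odot>\<^bsub>M\<^esub> x \<oplus>\<^bsub>M\<^esub> \<zero>\<^bsub>R\<^esub> \<odot>\<^bsub>M\<^esub> x = \<zero>\<^bsub>R\<^esub> \<odot>\<^bsub>M\<^esub> x \<oplus>\<^bsub>M\<^esub> \<zero>\<^bsub>M\<^esub>"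
    using left_module_add_smult[OF M, of "\<zero>\<^bsub>R\<^esub>" "\<zero>\<^bsub>R\<^esub>" x] x closed by simp
  then show ?thesis using closed M.add.l_cancel by (metis M.zero_closed)
qed

lemma left_module_smult_zero:
  assumes M: "left_module R M" and a: "a \<in> carrier R"
  shows "a \<odot>\<^bsub>M\<^esub> \<zero>\<^bsub>M\<^esub> = \<zero>\<^bsub>M\<^esub>"
proof -
  interpret M: abelian_group M using left_module_abelian_group[OF M] .
  have closed: "a \<odot>\<^bsub>M\<^esub> \<zero>\<^bsub>M\<^esub> \<in> carrier M" using left_module_smult_closed[OF M] a by simp
  have "a \<odot>\<^bsub>M\<^esub> \<zero>\<^bsub>M\<^esub> \<oplus>\<^bsub>M\<^esub> a \<odot>\<^bsub>M\<^esub> \<zero>\<^bsub>M\<^esub> = a \<odot>\<^bsub>M\<^esub> \<zero>\<^bsub>M\<^esub> \<oplus>\<^bsub>M\<^esub> \<zero>\<^bsub>M\<^esub>"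
    using left_module_smult_add[OF M, of a "\<zero>\<^bsub>M\<^esub>" "\<zero>\<^bsub>M\<^esub>"] a closed by simp
  then show ?thesis using closed M.add.l_cancel by (metis M.zero_closed)
qed

lemma left_module_minus_one_smult:
  assumes M: "left_module R M" and x: "x \<in> carrier M"
  shows "(\<ominus>\<^bsub>R\<^esub> \<one>\<^bsub>R\<^esub>) \<odot>\<^bsub>M\<^esub> x = \<ominus>\<^bsub>M\<^esub> x"
proof -
  interpret M: abelian_group M using left_module_abelian_group[OF M] .
  interpret R: ring R using left_module_ring[OF M] .
  have "(\<ominus>\<^bsub>R\<^esub> \<one>\<^bsub>R\<^esub>) \<odot>\<^bsub>M\<^esub> x \<oplus>\<^bsub>M\<^esub> x = (\<ominus>\<^bsub>R\<^esub> \<one>\<^bsub>R\<^esub> \<oplus>\<^bsub>R\<^esub> \<one>\<^bsub>R\<^esub>) \<odot>\<^bsub>M\<^esub> x"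
    using left_module_add_smult[OF M] left_module_one_smult[OF M] x by simp
  also have "\<dots> = \<zero>\<^bsub>M\<^esub>"
    using left_module_zero_smult[OF M x] by (simp add: R.l_neg)
  finally have "\<ominus>\<^bsub>M\<^esub> x = (\<ominus>\<^bsub>R\<^esub> \<one>\<^bsub>R\<^esub>) \<odot>\<^bsub>M\<^esub> x"
    using x left_module_smult_closed[OF M] by (intro M.minus_equality) auto
  then show ?thesis by simp
qed

lemma lsubmodule_subset: "lsubmodule R M U \<Longrightarrow> U \<subseteq> carrier M"
  and lsubmodule_zero_closed: "lsubmodule R M U \<Longrightarrow> \<zero>\<^bsub>M\<^esub> \<in> U"
  and lsubmodule_add_closed: "lsubmodule R M U \<Longrightarrow> x \<in> U \<Longrightarrow> y \<in> U \<Longrightarrow> x \<oplus>\<^bsub>M\<^esub> y \<in> U"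
  and lsubmodule_smult_closed: "lsubmodule R M U \<Longrightarrow> a \<in> carrier R \<Longrightarrow> x \<in> U \<Longrightarrow> a \<odot>\<^bsub>M\<^esub> x \<in> U"
  by (simp_all add: lsubmodule_def)

lemma lsubmoduleI:
  assumes M: "left_module R M" and "U \<subseteq> carrier M" and "\<zero>\<^bsub>M\<^esub> \<in> U"
    and "\<And>x y. x \<in> U \<Longrightarrow> y \<in> U \<Longrightarrow> x \<oplus>\<^bsub>M\<^esub> y \<in> U"
    and smult: "\<And>a x. a \<in> carrier R \<Longrightarrow> x \<in> U \<Longrightarrow> a \<odot>\<^bsub>M\<^esub> x \<in> U"
  shows "lsubmodule R M U"
proof -
  interpret R: ring R using left_module_ring[OF M] .
  have "\<ominus>\<^bsub>M\<^esub> x \<in> U" if "x \<in> U" for x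
    using smult[of "\<ominus>\<^bsub>R\<^esub> \<one>\<^bsub>R\<^esub>" x] that assms(2) left_module_minus_one_smult[OF M] by auto
  with assms show ?thesis unfolding lsubmodule_def by blast
qed

lemma lsubmodule_carrier:
  assumes M: "left_module R M"
  shows "lsubmodule R M (carrier M)"
proof -
  interpret M: abelian_group M using left_module_abelian_group[OF M] .
  show ?thesis by (rule lsubmoduleI[OF M]) (auto simp: left_module_smult_closed[OF M])
qed

lemma left_module_restrict:
  assumes M: "left_module R M" and U: "lsubmodule R M U"
  shows "left_module R (M\<lparr>carrier := U\<rparr>)"
proof -
  interpret M: abelian_group M using left_module_abelian_group[OF M] .
  have UM: "\<And>x. x \<in> U \<Longrightarrow> x \<in> carrier M" using lsubmodule_subset[OF U] by blast
  have "abelian_group (M\<lparr>carrier := U\<rparr>)"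
  proof (rule abelian_groupI, goal_cases)
    case (3 x y z) then show ?case using UM by (simp add: M.a_assoc)
  next
    case (4 x y) then show ?case using UM by (simp add: M.a_comm)
  next
    case (5 x) then show ?case using UM by simp
  next
    case (6 x) then show ?case
      using U UM by (intro bexI[of _ "\<ominus>\<^bsub>M\<^esub> x"]) (auto simp: lsubmodule_def M.l_neg)
  qed (use U in \<open>auto simp: lsubmodule_def\<close>)
  with M U UM show ?thesis unfolding left_module_def lsubmodule_def by simp
qed

lemma lmod_hom_zero:
  assumes Z: "left_module R Z" and M: "left_module R M" and h: "lmod_hom R Z M h"
  shows "h \<zero>\<^bsub>Z\<^esub> = \<zero>\<^bsub>M\<^esub>"
proof -
  interpret Z: abelian_group Z using left_module_abelian_group[OF Z] .
  interpret R: ring R using left_module_ring[OF Z] .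
  have "h \<zero>\<^bsub>Z\<^esub> = h (\<zero>\<^bsub>R\<^esub> \<odot>\<^bsub>Z\<^esub> \<zero>\<^bsub>Z\<^esub>)" using left_module_zero_smult[OF Z] by simp
  also have "\<dots> = \<zero>\<^bsub>R\<^esub> \<odot>\<^bsub>M\<^esub> h \<zero>\<^bsub>Z\<^esub>" using h by (simp add: lmod_hom_def)
  also have "\<dots> = \<zero>\<^bsub>M\<^esub>" using h left_module_zero_smult[OF M] by (auto simp: lmod_hom_def)
  finally show ?thesis .
qed

lemma lsubmodule_image:
  assumes Z: "left_module R Z" and M: "left_module R M" and h: "lmod_hom R Z M h"
    and C: "lsubmodule R Z C"
  shows "lsubmodule R M (h ` C)"
proof (rule lsubmoduleI[OF M])
  have CZ: "C \<subseteq> carrier Z" by (rule lsubmodule_subset[OF C])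
  then show "h ` C \<subseteq> carrier M" using h by (auto simp: lmod_hom_def)
  show "\<zero>\<^bsub>M\<^esub> \<in> h ` C" using lsubmodule_zero_closed[OF C] lmod_hom_zero[OF Z M h] by (metis imageI)
  show "u \<oplus>\<^bsub>M\<^esub> v \<in> h ` C" if uv_in: "u \<in> h ` C" "v \<in> h ` C" for u v
  proof -
    obtain x y where xy: "x \<in> C" "y \<in> C" and uv: "u = h x" "v = h y" using uv_in by blast
    have "u \<oplus>\<^bsub>M\<^esub> v = h (x \<oplus>\<^bsub>Z\<^esub> y)"
      using xy uv CZ h by (simp add: lmod_hom_def subset_iff)
    moreover have "x \<oplus>\<^bsub>Z\<^esub> y \<in> C" using lsubmodule_add_closed[OF C xy] .
    ultimately show ?thesis by blast
  qed
  show "a \<odot>\<^bsub>M\<^esub> u \<in> h ` C" if a: "a \<in> carrier R" and u_in: "u \<in> h ` C" for a u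
  proof -
    obtain x where x: "x \<in> C" and u: "u = h x" using u_in by blast
    have "a \<odot>\<^bsub>M\<^esub> u = h (a \<odot>\<^bsub>Z\<^esub> x)"
      using a x u CZ h by (simp add: lmod_hom_def subset_iff)
    moreover have "a \<odot>\<^bsub>Z\<^esub> x \<in> C" using lsubmodule_smult_closed[OF C a x] .
    ultimately show ?thesis by blast
  qed
qed

fun lincomb :: "('r, 'a) module \<Rightarrow> 'r list \<Rightarrow> 'a list \<Rightarrow> 'a" where
  "lincomb M (a # as) (x # xs) = a \<odot>\<^bsub>M\<^esub> x \<oplus>\<^bsub>M\<^esub> lincomb M as xs"
| "lincomb M _ _ = \<zero>\<^bsub>M\<^esub>"

definition lspan :: "('r, 'c) ring_scheme \<Rightarrow> ('r, 'a) module \<Rightarrow> 'a list \<Rightarrow> 'a set" where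
  "lspan R M xs = {lincomb M as xs | as. length as = length xs \<and> set as \<subseteq> carrier R}"

lemma lincomb_in_lsubmodule:
  assumes U: "lsubmodule R M U" and "set xs \<subseteq> U" and "set as \<subseteq> carrier R"
  shows "lincomb M as xs \<in> U"
  using assms(2,3)
proof (induction xs arbitrary: as)
  case Nil then show ?case using U by (cases as) (auto simp: lsubmodule_def)
next
  case (Cons x xs) then show ?case using U by (cases as) (auto simp: lsubmodule_def)
qed

lemma lincomb_closed:
  "left_module R M \<Longrightarrow> set xs \<subseteq> carrier M \<Longrightarrow> set as \<subseteq> carrier R \<Longrightarrow> lincomb M as xs \<in> carrier M"
  by (rule lincomb_in_lsubmodule[OF lsubmodule_carrier])

lemma lincomb_replicate_zero:
  assumes M: "left_module R M" and "set xs \<subseteq> carrier M"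
  shows "lincomb M (replicate n \<zero>\<^bsub>R\<^esub>) xs = \<zero>\<^bsub>M\<^esub>"
  using assms(2)
proof (induction xs arbitrary: n)
  case (Cons x xs)
  interpret M: abelian_group M using left_module_abelian_group[OF M] .
  show ?case using Cons left_module_zero_smult[OF M] by (cases n) auto
qed simp

lemma lincomb_add:
  assumes M: "left_module R M" and "set xs \<subseteq> carrier M" "set as \<subseteq> carrier R" "set bs \<subseteq> carrier R"
    and "length as = length xs" "length bs = length xs"
  shows "lincomb M (map2 (\<oplus>\<^bsub>R\<^esub>) as bs) xs = lincomb M as xs \<oplus>\<^bsub>M\<^esub> lincomb M bs xs"
  using assms(2-)
proof (induction xs arbitrary: as bs)
  case Nil
  interpret M: abelian_group M using left_module_abelian_group[OF M] .
  show ?case using Nil by simp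
next
  case (Cons x xs)
  interpret M: abelian_group M using left_module_abelian_group[OF M] .
  obtain a as' where a: "as = a # as'" using Cons by (cases as) auto
  obtain b bs' where b: "bs = b # bs'" using Cons by (cases bs) auto
  have "lincomb M as' xs \<in> carrier M" "lincomb M bs' xs \<in> carrier M"
    "a \<odot>\<^bsub>M\<^esub> x \<in> carrier M" "b \<odot>\<^bsub>M\<^esub> x \<in> carrier M"
    using lincomb_closed[OF M] left_module_smult_closed[OF M] Cons a b by auto
  then show ?case using Cons.IH[of as' bs'] Cons.prems a b left_module_add_smult[OF M, of a b x]
    by (simp add: M.a_ac)
qed

lemma lincomb_smult:
  assumes M: "left_module R M" and "set xs \<subseteq> carrier M" "set as \<subseteq> carrier R" and c: "c \<in> carrier R"
  shows "lincomb M (map ((\<otimes>\<^bsub>R\<^esub>) c) as) xs = c \<odot>\<^bsub>M\<^esub> lincomb M as xs"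
  using assms(2,3)
proof (induction xs arbitrary: as)
  case Nil
  then show ?case using left_module_smult_zero[OF M c] by (cases as) auto
next
  case (Cons x xs)
  show ?case
  proof (cases as)
    case Nil then show ?thesis using left_module_smult_zero[OF M c] by simp
  next
    case (Cons a as')
    have "lincomb M as' xs \<in> carrier M" "a \<odot>\<^bsub>M\<^esub> x \<in> carrier M"
      using lincomb_closed[OF M] left_module_smult_closed[OF M] Cons.prems Cons by auto
    then show ?thesis using Cons.IH[of as'] Cons.prems Cons left_module_smult_add[OF M c]
      left_module_smult_assoc[OF M c, of a x] by simp
  qed
qed

lemma lsubmodule_lspan:
  assumes M: "left_module R M" and xs: "set xs \<subseteq> carrier M"
  shows "lsubmodule R M (lspan R M xs)"
proof (rule lsubmoduleI[OF M])
  interpret R: ring R using left_module_ring[OF M] .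
  show "lspan R M xs \<subseteq> carrier M" using lincomb_closed[OF M xs] by (auto simp: lspan_def)
  show "\<zero>\<^bsub>M\<^esub> \<in> lspan R M xs"
    using lincomb_replicate_zero[OF M xs, of "length xs"] unfolding lspan_def
    by (intro CollectI exI[of _ "replicate (length xs) \<zero>\<^bsub>R\<^esub>"]) auto
  show "x \<oplus>\<^bsub>M\<^esub> y \<in> lspan R M xs" if xy: "x \<in> lspan R M xs" "y \<in> lspan R M xs" for x y
  proof -
    obtain as bs where as: "x = lincomb M as xs" "length as = length xs" "set as \<subseteq> carrier R"
      and bs: "y = lincomb M bs xs" "length bs = length xs" "set bs \<subseteq> carrier R"
      using xy unfolding lspan_def by blast
    have "a \<oplus>\<^bsub>R\<^esub> b \<in> carrier R" if "(a, b) \<in> set (zip as bs)" for a b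
      using set_zip_leftD[OF that] set_zip_rightD[OF that] as(3) bs(3) by auto
    then have "set (map2 (\<oplus>\<^bsub>R\<^esub>) as bs) \<subseteq> carrier R" by auto
    then show ?thesis unfolding lspan_def using as bs lincomb_add[OF M xs as(3) bs(3)]
      by (intro CollectI exI[of _ "map2 (\<oplus>\<^bsub>R\<^esub>) as bs"]) auto
  qed
  show "c \<odot>\<^bsub>M\<^esub> x \<in> lspan R M xs" if c: "c \<in> carrier R" and x: "x \<in> lspan R M xs" for c x
  proof -
    obtain as where as: "x = lincomb M as xs" "length as = length xs" "set as \<subseteq> carrier R"
      using x unfolding lspan_def by blast
    show ?thesis unfolding lspan_def using as c lincomb_smult[OF M xs as(3) c]
      by (intro CollectI exI[of _ "map ((\<otimes>\<^bsub>R\<^esub>) c) as"]) auto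
  qed
qed

lemma lspan_subset: "lsubmodule R M U \<Longrightarrow> set xs \<subseteq> U \<Longrightarrow> lspan R M xs \<subseteq> U"
  using lincomb_in_lsubmodule unfolding lspan_def by blast

lemma lspan_Cons:
  assumes M: "left_module R M" and xs: "set (x # xs) \<subseteq> carrier M"
  shows "lspan R M xs \<subseteq> lspan R M (x # xs)" and "x \<in> lspan R M (x # xs)"
proof -
  interpret M: abelian_group M using left_module_abelian_group[OF M] .
  interpret R: ring R using left_module_ring[OF M] .
  show "lspan R M xs \<subseteq> lspan R M (x # xs)"
  proof
    fix y assume "y \<in> lspan R M xs"
    then obtain as where as: "y = lincomb M as xs" "length as = length xs" "set as \<subseteq> carrier R"
      unfolding lspan_def by blast
    have "lincomb M (\<zero>\<^bsub>R\<^esub> # as) (x # xs) = y"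
      using as xs lincomb_closed[OF M] left_module_zero_smult[OF M, of x] by simp
    then show "y \<in> lspan R M (x # xs)" unfolding lspan_def using as
      by (intro CollectI exI[of _ "\<zero>\<^bsub>R\<^esub> # as"]) auto
  qed
  have "lincomb M (\<one>\<^bsub>R\<^esub> # replicate (length xs) \<zero>\<^bsub>R\<^esub>) (x # xs) = x"
    using xs left_module_one_smult[OF M] lincomb_replicate_zero[OF M] by simp
  then show "x \<in> lspan R M (x # xs)" unfolding lspan_def
    by (intro CollectI exI[of _ "\<one>\<^bsub>R\<^esub> # replicate (length xs) \<zero>\<^bsub>R\<^esub>"]) auto
qed

lemma fin_length_lsubmodule_finitely_generated:
  fixes M :: "('r, 'a) module"
  assumes fl: "fin_length R M" and U: "lsubmodule R M U"
  shows "\<exists>xs. set xs \<subseteq> U \<and> lspan R M xs = U"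
proof (rule ccontr)
  assume not_fg: "\<not> ?thesis"
  have M: "left_module R M" using fl by (simp add: fin_length_def)
  obtain n where bound: "\<And>(C :: nat \<Rightarrow> 'a set) m.
      (\<forall>i\<le>m. lsubmodule R M (C i)) \<and> (\<forall>i<m. C i \<subset> C (Suc i)) \<Longrightarrow> m \<le> n"
    using fl unfolding fin_length_def by blast
  have UM: "U \<subseteq> carrier M" by (rule lsubmodule_subset[OF U])
  \<comment> \<open>Repeatedly adding an element outside the current span yields arbitrarily long strictly
    increasing chains of submodules.\<close>
  define new where "new xs = (SOME x. x \<in> U - lspan R M xs)" for xs
  have new: "new xs \<in> U - lspan R M xs" if "set xs \<subseteq> U" for xs
  proof -
    have "lspan R M xs \<subset> U" using not_fg lspan_subset[OF U that] that by blast
    then obtain x where "x \<in> U - lspan R M xs" by blast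
    then show ?thesis unfolding new_def by (rule someI)
  qed
  define gens where "gens = rec_nat [] (\<lambda>_ xs. new xs # xs)"
  have gens_Suc: "gens (Suc i) = new (gens i) # gens i" for i by (simp add: gens_def)
  have gens_U: "set (gens i) \<subseteq> U" for i
  proof (induction i)
    case (Suc i) then show ?case using new[OF Suc] by (simp add: gens_Suc)
  qed (simp add: gens_def)
  have "lspan R M (gens i) \<subset> lspan R M (gens (Suc i))" for i
  proof -
    have x: "new (gens i) \<in> U - lspan R M (gens i)" using new[OF gens_U[of i]] .
    then have "set (new (gens i) # gens i) \<subseteq> carrier M" using gens_U[of i] UM by auto
    from lspan_Cons[OF M this] x show ?thesis by (auto simp: gens_Suc)
  qed
  then have "Suc n \<le> n"
    using lsubmodule_lspan[OF M] gens_U UM by (intro bound[where C = "\<lambda>i. lspan R M (gens i)"]) blast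
  then show False by simp
qed

lemma fin_length_lsubmodule_inj_lists:
  fixes M :: "('r, 'a) module"
  assumes "fin_length R M" and "lsubmodule R M U"
  shows "\<exists>e :: 'a \<Rightarrow> 'r list. inj_on e U"
proof -
  obtain xs where "lspan R M xs = U"
    using fin_length_lsubmodule_finitely_generated[OF assms] by blast
  then have "\<forall>u\<in>U. \<exists>as. lincomb M as xs = u" unfolding lspan_def by blast
  then obtain e where "\<And>u. u \<in> U \<Longrightarrow> lincomb M (e u) xs = u" by metis
  then have "inj_on e U" by (metis inj_onI)
  then show ?thesis by blast
qed

text \<open>deg_le only admits auxiliary modules carried by 'r list, so a submodule is moved onto
  the image of an injection.\<close>

definition transport_module :: "('r, 'a) module \<Rightarrow> 'a set \<Rightarrow> ('a \<Rightarrow> 'b) \<Rightarrow> ('r, 'b) module" where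
  "transport_module M U e = \<lparr>carrier = e ` U, monoid.mult = (\<lambda>_ _. undefined), one = undefined,
     ring.zero = e \<zero>\<^bsub>M\<^esub>,
     ring.add = (\<lambda>z w. e (inv_into U e z \<oplus>\<^bsub>M\<^esub> inv_into U e w)),
     smult = (\<lambda>a z. e (a \<odot>\<^bsub>M\<^esub> inv_into U e z))\<rparr>"

lemma transport_module_simps [simp]:
  "carrier (transport_module M U e) = e ` U"
  "\<zero>\<^bsub>transport_module M U e\<^esub> = e \<zero>\<^bsub>M\<^esub>"
  by (simp_all add: transport_module_def)

lemma transport_module_add:
  "inj_on e U \<Longrightarrow> u \<in> U \<Longrightarrow> v \<in> U \<Longrightarrow> e u \<oplus>\<^bsub>transport_module M U e\<^esub> e v = e (u \<oplus>\<^bsub>M\<^esub> v)"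
  by (simp add: transport_module_def)

lemma transport_module_smult:
  "inj_on e U \<Longrightarrow> u \<in> U \<Longrightarrow> a \<odot>\<^bsub>transport_module M U e\<^esub> e u = e (a \<odot>\<^bsub>M\<^esub> u)"
  by (simp add: transport_module_def)

lemma left_module_transport_module:
  assumes M: "left_module R M" and U: "lsubmodule R M U" and e: "inj_on e U"
  shows "left_module R (transport_module M U e)"
proof -
  interpret M: abelian_group M using left_module_abelian_group[OF M] .
  interpret R: ring R using left_module_ring[OF M] .
  let ?Z = "transport_module M U e"
  have UM: "\<And>x. x \<in> U \<Longrightarrow> x \<in> carrier M" and zero: "\<zero>\<^bsub>M\<^esub> \<in> U"
    and add: "\<And>x y. x \<in> U \<Longrightarrow> y \<in> U \<Longrightarrow> x \<oplus>\<^bsub>M\<^esub> y \<in> U"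
    and minus: "\<And>x. x \<in> U \<Longrightarrow> \<ominus>\<^bsub>M\<^esub> x \<in> U"
    and smult: "\<And>a x. a \<in> carrier R \<Longrightarrow> x \<in> U \<Longrightarrow> a \<odot>\<^bsub>M\<^esub> x \<in> U"
    using U unfolding lsubmodule_def by auto
  note ops = transport_module_add[OF e] transport_module_smult[OF e]
  have "abelian_group ?Z"
  proof (rule abelian_groupI, goal_cases)
    case (1 x y) then show ?case using add by (auto simp: ops)
  next
    case 2 then show ?case using zero by simp
  next
    case (3 x y z) then show ?case using add UM by (auto simp: ops M.a_assoc)
  next
    case (4 x y) then show ?case using UM by (auto simp: ops M.a_comm)
  next
    case (5 x) then show ?case using zero UM by (auto simp: ops)
  next
    case (6 x)
    then obtain u where u: "u \<in> U" "x = e u" by auto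
    show ?case using u minus UM
      by (intro bexI[of _ "e (\<ominus>\<^bsub>M\<^esub> u)"]) (auto simp: ops M.l_neg)
  qed
  then show ?thesis
    unfolding left_module_def using R.ring_axioms smult UM add
    by (auto simp: ops left_module_add_smult[OF M] left_module_smult_add[OF M]
        left_module_smult_assoc[OF M] left_module_one_smult[OF M])
qed

lemma lmod_hom_transport_module_inv_into:
  assumes U: "lsubmodule R M U" and e: "inj_on e U"
  shows "lmod_hom R (transport_module M U e) (M\<lparr>carrier := U\<rparr>) (inv_into U e)"
  using U e unfolding lmod_hom_def lsubmodule_def
  by (auto simp: transport_module_add transport_module_smult inv_into_into)

lemma fin_length_restrict:
  fixes M :: "('r, 'a) module"
  assumes fl: "fin_length R M" and U: "lsubmodule R M U"
  shows "fin_length R (M\<lparr>carrier := U\<rparr>)"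
proof -
  have M: "left_module R M" using fl by (simp add: fin_length_def)
  obtain n where bound: "\<And>(C :: nat \<Rightarrow> 'a set) m.
      (\<forall>i\<le>m. lsubmodule R M (C i)) \<and> (\<forall>i<m. C i \<subset> C (Suc i)) \<Longrightarrow> m \<le> n"
    using fl unfolding fin_length_def by blast
  have sub: "lsubmodule R M C" if "lsubmodule R (M\<lparr>carrier := U\<rparr>) C" for C
    using that U by (intro lsubmoduleI[OF M]) (auto simp: lsubmodule_def)
  have "m \<le> n" if "\<forall>i\<le>m. lsubmodule R (M\<lparr>carrier := U\<rparr>) (C i)" "\<forall>i<m. C i \<subset> C (Suc i)" for C m
    using that sub bound[where C = C and m = m] by blast
  with left_module_restrict[OF M U] show ?thesis unfolding fin_length_def by blast
qed

lemma fin_length_inj_hom: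
  fixes Z :: "('r, 'b) module" and M :: "('r, 'a) module"
  assumes Z: "left_module R Z" and fl: "fin_length R M"
    and h: "lmod_hom R Z M h" and inj: "inj_on h (carrier Z)"
  shows "fin_length R Z"
proof -
  have M: "left_module R M" using fl by (simp add: fin_length_def)
  obtain n where bound: "\<And>(C :: nat \<Rightarrow> 'a set) m.
      (\<forall>i\<le>m. lsubmodule R M (C i)) \<and> (\<forall>i<m. C i \<subset> C (Suc i)) \<Longrightarrow> m \<le> n"
    using fl unfolding fin_length_def by blast
  have "m \<le> n" if sub: "\<forall>i\<le>m. lsubmodule R Z (C i)" and strict: "\<forall>i<m. C i \<subset> C (Suc i)" for C m
  proof (rule bound[where C = "\<lambda>i. h ` C i"], intro conjI allI impI)
    fix i assume "i \<le> m"
    then show "lsubmodule R M (h ` C i)" using lsubmodule_image[OF Z M h] sub by blast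
  next
    fix i assume i: "i < m"
    have "C (Suc i) \<subseteq> carrier Z" using sub i lsubmodule_subset by (metis Suc_leI)
    then show "h ` C i \<subset> h ` C (Suc i)" using strict i inj by (meson image_strict_mono inj_on_subset)
  qed
  with Z show ?thesis unfolding fin_length_def by blast
qed

lemma fin_length_lsubmodule_iso_list_module:
  fixes M :: "('r, 'a) module"
  assumes fl: "fin_length R M" and U: "lsubmodule R M U"
  shows "\<exists>(Z :: ('r, 'r list) module) \<phi>. fin_length R Z \<and>
           lmod_hom R Z (M\<lparr>carrier := U\<rparr>) \<phi> \<and> bij_betw \<phi> (carrier Z) U"
proof -
  have M: "left_module R M" using fl by (simp add: fin_length_def)
  obtain e :: "'a \<Rightarrow> 'r list" where e: "inj_on e U"
    using fin_length_lsubmodule_inj_lists[OF fl U] by blast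
  let ?Z = "transport_module M U e"
  have hom: "lmod_hom R ?Z (M\<lparr>carrier := U\<rparr>) (inv_into U e)"
    by (rule lmod_hom_transport_module_inv_into[OF U e])
  have bij: "bij_betw (inv_into U e) (carrier ?Z) U"
    using e by (simp add: bij_betw_inv_into inj_on_imp_bij_betw)
  have "fin_length R ?Z"
    using fin_length_inj_hom[OF left_module_transport_module[OF M U e] fin_length_restrict[OF fl U] hom]
      bij by (simp add: bij_betw_def)
  with hom bij show ?thesis by blast
qed

lemma dsum_simps [simp]:
  "carrier (dsum M N) = carrier M \<times> carrier N"
  "\<zero>\<^bsub>dsum M N\<^esub> = (\<zero>\<^bsub>M\<^esub>, \<zero>\<^bsub>N\<^esub>)"
  "x \<oplus>\<^bsub>dsum M N\<^esub> y = (fst x \<oplus>\<^bsub>M\<^esub> fst y, snd x \<oplus>\<^bsub>N\<^esub> snd y)"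
  "a \<odot>\<^bsub>dsum M N\<^esub> x = (a \<odot>\<^bsub>M\<^esub> fst x, a \<odot>\<^bsub>N\<^esub> snd x)"
  by (simp_all add: dsum_def)

definition short_exact :: "('r, 'c) ring_scheme \<Rightarrow> ('r, 'a) module \<Rightarrow> ('r, 'b) module \<Rightarrow>
    ('r, 'd) module \<Rightarrow> ('a \<Rightarrow> 'b) \<Rightarrow> ('b \<Rightarrow> 'd) \<Rightarrow> bool" where
  "short_exact R A B C i p \<longleftrightarrow>
     lmod_hom R A B i \<and> inj_on i (carrier A) \<and> lmod_hom R B C p \<and> p ` carrier B = carrier C \<and>
     i ` carrier A = {b \<in> carrier B. p b = \<zero>\<^bsub>C\<^esub>}"

lemma deg_le_iff_short_exact:
  "deg_le R M N \<longleftrightarrow>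
     (\<exists>(Z :: ('r, 'r list) module) f g. fin_length R Z \<and> short_exact R Z (dsum M Z) N f g)"
  unfolding deg_le_def short_exact_def by blast

lemma short_exact_dsum_swap:
  assumes ex: "short_exact R A M N i p" and A: "left_module R A" and Z: "left_module R Z"
    and \<phi>: "lmod_hom R Z A \<phi>" and bij: "bij_betw \<phi> (carrier Z) (carrier A)"
  shows "short_exact R Z (dsum M Z) (dsum A N)
           (\<lambda>z. (i (\<phi> z), \<zero>\<^bsub>Z\<^esub>)) (\<lambda>w. (\<phi> (snd w), p (fst w)))"
  unfolding short_exact_def
proof (intro conjI)
  interpret Z: abelian_group Z using left_module_abelian_group[OF Z] .
  from ex have i: "lmod_hom R A M i" "inj_on i (carrier A)"
    and p: "lmod_hom R M N p" "p ` carrier M = carrier N"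
    and ker: "i ` carrier A = {m \<in> carrier M. p m = \<zero>\<^bsub>N\<^esub>}"
    unfolding short_exact_def by auto
  have \<phi>_zero: "\<phi> \<zero>\<^bsub>Z\<^esub> = \<zero>\<^bsub>A\<^esub>" by (rule lmod_hom_zero[OF Z A \<phi>])
  have \<phi>_onto: "\<phi> ` carrier Z = carrier A" and \<phi>_inj: "inj_on \<phi> (carrier Z)"
    using bij by (simp_all add: bij_betw_def)
  then have \<phi>_into: "\<And>z. z \<in> carrier Z \<Longrightarrow> \<phi> z \<in> carrier A" by blast
  have p_i: "\<And>a. a \<in> carrier A \<Longrightarrow> p (i a) = \<zero>\<^bsub>N\<^esub>" and i_into: "\<And>a. a \<in> carrier A \<Longrightarrow> i a \<in> carrier M"
    using ker by blast+
  show "lmod_hom R Z (dsum M Z) (\<lambda>z. (i (\<phi> z), \<zero>\<^bsub>Z\<^esub>))"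
    using \<phi> i(1) \<phi>_into left_module_smult_zero[OF Z] by (auto simp: lmod_hom_def)
  show "inj_on (\<lambda>z. (i (\<phi> z), \<zero>\<^bsub>Z\<^esub>)) (carrier Z)"
    using i(2) \<phi>_inj \<phi>_into by (auto simp: inj_on_def)
  show "lmod_hom R (dsum M Z) (dsum A N) (\<lambda>w. (\<phi> (snd w), p (fst w)))"
    using \<phi> p(1) by (auto simp: lmod_hom_def)
  have "(\<lambda>w. (\<phi> (snd w), p (fst w))) ` (carrier M \<times> carrier Z) = \<phi> ` carrier Z \<times> p ` carrier M"
    by force
  then show "(\<lambda>w. (\<phi> (snd w), p (fst w))) ` carrier (dsum M Z) = carrier (dsum A N)"
    using \<phi>_onto p(2) by simp
  show "(\<lambda>z. (i (\<phi> z), \<zero>\<^bsub>Z\<^esub>)) ` carrier Z =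
      {w \<in> carrier (dsum M Z). (\<phi> (snd w), p (fst w)) = \<zero>\<^bsub>dsum A N\<^esub>}"
  proof
    show "(\<lambda>z. (i (\<phi> z), \<zero>\<^bsub>Z\<^esub>)) ` carrier Z \<subseteq>
        {w \<in> carrier (dsum M Z). (\<phi> (snd w), p (fst w)) = \<zero>\<^bsub>dsum A N\<^esub>}"
      using \<phi>_into \<phi>_zero p_i i_into by auto
    show "{w \<in> carrier (dsum M Z). (\<phi> (snd w), p (fst w)) = \<zero>\<^bsub>dsum A N\<^esub>} \<subseteq>
        (\<lambda>z. (i (\<phi> z), \<zero>\<^bsub>Z\<^esub>)) ` carrier Z"
    proof
      fix w assume "w \<in> {w \<in> carrier (dsum M Z). (\<phi> (snd w), p (fst w)) = \<zero>\<^bsub>dsum A N\<^esub>}"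
      then obtain m z where w: "w = (m, z)" and mz: "m \<in> carrier M" "z \<in> carrier Z"
        and ker_w: "\<phi> z = \<zero>\<^bsub>A\<^esub>" "p m = \<zero>\<^bsub>N\<^esub>" by auto
      have "z = \<zero>\<^bsub>Z\<^esub>" using mz ker_w \<phi>_inj \<phi>_zero by (auto simp: inj_on_def)
      moreover obtain a where "a \<in> carrier A" "m = i a" using mz ker_w ker by blast
      moreover obtain z' where "z' \<in> carrier Z" "a = \<phi> z'" using \<open>a \<in> carrier A\<close> \<phi>_onto by blast
      ultimately show "w \<in> (\<lambda>z. (i (\<phi> z), \<zero>\<^bsub>Z\<^esub>)) ` carrier Z" using w by blast
    qed
  qed
qed

lemma deg_le_short_exact:
  fixes Z :: "('r, 'r list) module"
  assumes "short_exact R A M N i p" and "left_module R A"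
    and Z: "fin_length R Z" and "lmod_hom R Z A \<phi>" and "bij_betw \<phi> (carrier Z) (carrier A)"
  shows "deg_le R M (dsum A N)"
proof -
  have "left_module R Z" using Z by (simp add: fin_length_def)
  with assms have "short_exact R Z (dsum M Z) (dsum A N)
      (\<lambda>z. (i (\<phi> z), \<zero>\<^bsub>Z\<^esub>)) (\<lambda>w. (\<phi> (snd w), p (fst w)))"
    by (intro short_exact_dsum_swap)
  with Z show ?thesis unfolding deg_le_iff_short_exact by blast
qed

lemma lsubmodule_dsum_fst_slice:
  assumes M: "left_module R M" and N: "left_module R N" and W: "lsubmodule R (dsum M N) W"
  shows "lsubmodule R M {x \<in> carrier M. (x, \<zero>\<^bsub>N\<^esub>) \<in> W}"
proof (rule lsubmoduleI[OF M])
  interpret M: abelian_group M using left_module_abelian_group[OF M] .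
  interpret N: abelian_group N using left_module_abelian_group[OF N] .
  show "\<zero>\<^bsub>M\<^esub> \<in> {x \<in> carrier M. (x, \<zero>\<^bsub>N\<^esub>) \<in> W}"
    using lsubmodule_zero_closed[OF W] by simp
  show "x \<oplus>\<^bsub>M\<^esub> y \<in> {x \<in> carrier M. (x, \<zero>\<^bsub>N\<^esub>) \<in> W}"
    if "x \<in> {x \<in> carrier M. (x, \<zero>\<^bsub>N\<^esub>) \<in> W}" "y \<in> {x \<in> carrier M. (x, \<zero>\<^bsub>N\<^esub>) \<in> W}" for x y
    using lsubmodule_add_closed[OF W, of "(x, \<zero>\<^bsub>N\<^esub>)" "(y, \<zero>\<^bsub>N\<^esub>)"] that by simp
  show "a \<odot>\<^bsub>M\<^esub> x \<in> {x \<in> carrier M. (x, \<zero>\<^bsub>N\<^esub>) \<in> W}"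
    if a: "a \<in> carrier R" and x: "x \<in> {x \<in> carrier M. (x, \<zero>\<^bsub>N\<^esub>) \<in> W}" for a x
    using lsubmodule_smult_closed[OF W a, of "(x, \<zero>\<^bsub>N\<^esub>)"] x
      left_module_smult_zero[OF N a] left_module_smult_closed[OF M a] by simp
qed auto

lemma lsubmodule_dsum_snd_image:
  assumes N: "left_module R N" and W: "lsubmodule R (dsum M N) W"
  shows "lsubmodule R N (snd ` W)"
proof (rule lsubmoduleI[OF N])
  show "snd ` W \<subseteq> carrier N" using lsubmodule_subset[OF W] by auto
  have "(\<zero>\<^bsub>M\<^esub>, \<zero>\<^bsub>N\<^esub>) \<in> W" using lsubmodule_zero_closed[OF W] by simp
  then show "\<zero>\<^bsub>N\<^esub> \<in> snd ` W" by (metis imageI snd_conv)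
  show "u \<oplus>\<^bsub>N\<^esub> v \<in> snd ` W" if uv: "u \<in> snd ` W" "v \<in> snd ` W" for u v
  proof -
    obtain w w' where "w \<in> W" "w' \<in> W" "u = snd w" "v = snd w'" using uv by blast
    then show ?thesis using lsubmodule_add_closed[OF W, of w w'] by (metis imageI dsum_simps(3) snd_conv)
  qed
  show "a \<odot>\<^bsub>N\<^esub> u \<in> snd ` W" if a: "a \<in> carrier R" and u: "u \<in> snd ` W" for a u
  proof -
    obtain w where "w \<in> W" "u = snd w" using u by blast
    then show ?thesis using lsubmodule_smult_closed[OF W a, of w] by (metis imageI dsum_simps(4) snd_conv)
  qed
qed

lemma short_exact_lsubmodule_dsum:
  assumes N: "left_module R N" and W: "lsubmodule R (dsum M N) W"
  shows "short_exact R (M\<lparr>carrier := {x \<in> carrier M. (x, \<zero>\<^bsub>N\<^esub>) \<in> W}\<rparr>)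
           ((dsum M N)\<lparr>carrier := W\<rparr>) (N\<lparr>carrier := snd ` W\<rparr>) (\<lambda>x. (x, \<zero>\<^bsub>N\<^esub>)) snd"
  unfolding short_exact_def
proof (intro conjI)
  interpret N: abelian_group N using left_module_abelian_group[OF N] .
  have WMN: "W \<subseteq> carrier M \<times> carrier N" using lsubmodule_subset[OF W] by simp
  show "lmod_hom R (M\<lparr>carrier := {x \<in> carrier M. (x, \<zero>\<^bsub>N\<^esub>) \<in> W}\<rparr>) ((dsum M N)\<lparr>carrier := W\<rparr>)
      (\<lambda>x. (x, \<zero>\<^bsub>N\<^esub>))"
    using left_module_smult_zero[OF N] by (simp add: lmod_hom_def)
  show "lmod_hom R ((dsum M N)\<lparr>carrier := W\<rparr>) (N\<lparr>carrier := snd ` W\<rparr>) snd"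
    by (simp add: lmod_hom_def)
  show "(\<lambda>x. (x, \<zero>\<^bsub>N\<^esub>)) ` carrier (M\<lparr>carrier := {x \<in> carrier M. (x, \<zero>\<^bsub>N\<^esub>) \<in> W}\<rparr>) =
      {w \<in> carrier ((dsum M N)\<lparr>carrier := W\<rparr>). snd w = \<zero>\<^bsub>N\<lparr>carrier := snd ` W\<rparr>\<^esub>}"
    using WMN by force
qed (auto simp: inj_on_def)

theorem lemma2p2:
  fixes k :: "'k ring" and L :: "'r ring" and \<phi> :: "'k \<Rightarrow> 'r"
    and Xm :: "('r, 'a) module" and Ym :: "('r, 'b) module" and M :: "('a \<times> 'b) set"
  assumes "artin_algebra k L \<phi>"
    and "fin_length L Xm" and "fin_length L Ym"
    and "lsubmodule L (dsum Xm Ym) M"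
  shows "\<exists>Xs Ys. lsubmodule L Xm Xs \<and> lsubmodule L Ym Ys \<and>
           deg_le L ((dsum Xm Ym)\<lparr>carrier := M\<rparr>) (dsum (Xm\<lparr>carrier := Xs\<rparr>) (Ym\<lparr>carrier := Ys\<rparr>))"
proof -
  have X: "left_module L Xm" and Y: "left_module L Ym"
    using assms(2,3) by (simp_all add: fin_length_def)
  define Xs where "Xs = {x \<in> carrier Xm. (x, \<zero>\<^bsub>Ym\<^esub>) \<in> M}"
  have Xs: "lsubmodule L Xm Xs"
    unfolding Xs_def using X Y assms(4) by (rule lsubmodule_dsum_fst_slice)
  have Ys: "lsubmodule L Ym (snd ` M)"
    using Y assms(4) by (rule lsubmodule_dsum_snd_image)
  obtain Z :: "('r, 'r list) module" and \<psi> where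
    "fin_length L Z" "lmod_hom L Z (Xm\<lparr>carrier := Xs\<rparr>) \<psi>" "bij_betw \<psi> (carrier Z) Xs"
    using fin_length_lsubmodule_iso_list_module[OF assms(2) Xs] by blast
  then have "deg_le L ((dsum Xm Ym)\<lparr>carrier := M\<rparr>) (dsum (Xm\<lparr>carrier := Xs\<rparr>) (Ym\<lparr>carrier := snd ` M\<rparr>))"
    using short_exact_lsubmodule_dsum[OF Y assms(4), folded Xs_def] left_module_restrict[OF X Xs]
    by (intro deg_le_short_exact) simp_all
  with Xs Ys show ?thesis by blast
qed

end
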